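(* For online Facility Location with $\Delta$-MRF arrivals, there are instances (with $\Delta\to\infty$) for which no online algorithm is better than $\Omega(\Delta/\log\Delta)$-competitive.
   Context: Facility Location: clients (demands) are points of a metric space; a solution opens facilities at points (each with an opening cost) and connects each client to an open facility at cost equal to their distance; cost is total opening plus connection cost. Online: clients arrive one by one and after each arrival the algorithm irrevocably opens facilities/makes connections so all clients so far are served. $\Delta$-MRF arrivals: the sequence of $n$ clients $Y=(Y_1,\dots,Y_n)$ is drawn from a known distribution on $\Omega_1\times\dots\times\Omega_n$ of the form $\Pr[u]\propto\exp(\sum_i\psi_i(u_i)+\sum_{e\in E'}\psi_e((u_j)_{j\in e}))$ for a hypergraph $E'\subseteq2^{[n]}$ and potentials, whose weighted maximum degree $\max_i\max_u|\sum_{e\ni i}\psi_e((u_j)_{j\in e})|$ is $\Delta$. An algorithm is $\alpha$-competitive if $\mathbb{E}[\mathrm{ALG}(Y)]\le\alpha\,\mathbb{E}[\mathrm{OPT}(Y)]$. *)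

theory Defs
  imports "HOL-Probability.Probability"
begin

definition metric_on :: "nat set \<Rightarrow> (nat \<Rightarrow> nat \<Rightarrow> real) \<Rightarrow> bool" where
  "metric_on M d \<longleftrightarrow>
     (\<forall>x\<in>M. \<forall>y\<in>M. 0 \<le> d x y \<and> d x y = d y x \<and> (d x y = 0 \<longleftrightarrow> x = y)) \<and>
     (\<forall>x\<in>M. \<forall>y\<in>M. \<forall>z\<in>M. d x z \<le> d x y + d y z)"

definition mrf_support :: "nat \<Rightarrow> (nat \<Rightarrow> nat set) \<Rightarrow> nat list set" where
  "mrf_support n \<Omega> = {u. length u = n \<and> (\<forall>i<n. u ! i \<in> \<Omega> i)}"

definition mrf_weight ::
  "nat \<Rightarrow> (nat \<Rightarrow> nat \<Rightarrow> real) \<Rightarrow> nat set set \<Rightarrow> (nat set \<Rightarrow> (nat \<Rightarrow> nat) \<Rightarrow> real)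
     \<Rightarrow> nat list \<Rightarrow> real" where
  "mrf_weight n \<psi>1 E \<psi>E u =
     exp ((\<Sum>i<n. \<psi>1 i (u ! i)) + (\<Sum>e\<in>E. \<psi>E e (restrict (\<lambda>j. u ! j) e)))"

definition mrf_prob ::
  "nat \<Rightarrow> (nat \<Rightarrow> nat set) \<Rightarrow> (nat \<Rightarrow> nat \<Rightarrow> real) \<Rightarrow> nat set set
     \<Rightarrow> (nat set \<Rightarrow> (nat \<Rightarrow> nat) \<Rightarrow> real) \<Rightarrow> nat list \<Rightarrow> real" where
  "mrf_prob n \<Omega> \<psi>1 E \<psi>E u =
     mrf_weight n \<psi>1 E \<psi>E u / (\<Sum>v\<in>mrf_support n \<Omega>. mrf_weight n \<psi>1 E \<psi>E v)"

definition mrf_expect ::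
  "nat \<Rightarrow> (nat \<Rightarrow> nat set) \<Rightarrow> (nat \<Rightarrow> nat \<Rightarrow> real) \<Rightarrow> nat set set
     \<Rightarrow> (nat set \<Rightarrow> (nat \<Rightarrow> nat) \<Rightarrow> real) \<Rightarrow> (nat list \<Rightarrow> real) \<Rightarrow> real" where
  "mrf_expect n \<Omega> \<psi>1 E \<psi>E g =
     (\<Sum>u\<in>mrf_support n \<Omega>. mrf_prob n \<Omega> \<psi>1 E \<psi>E u * g u)"

definition mrf_Delta ::
  "nat \<Rightarrow> (nat \<Rightarrow> nat set) \<Rightarrow> nat set set \<Rightarrow> (nat set \<Rightarrow> (nat \<Rightarrow> nat) \<Rightarrow> real) \<Rightarrow> real" where
  "mrf_Delta n \<Omega> E \<psi>E =
     Max {\<bar>\<Sum>e\<in>{e\<in>E. i \<in> e}. \<psi>E e (restrict (\<lambda>j. u ! j) e)\<bar> | i u. i < n \<and> u \<in> mrf_support n \<Omega>}"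

definition fl_mrf_instance ::
  "nat set \<Rightarrow> (nat \<Rightarrow> nat \<Rightarrow> real) \<Rightarrow> (nat \<Rightarrow> real) \<Rightarrow> nat \<Rightarrow> (nat \<Rightarrow> nat set)
     \<Rightarrow> nat set set \<Rightarrow> bool" where
  "fl_mrf_instance M d f n \<Omega> E \<longleftrightarrow>
     finite M \<and> M \<noteq> {} \<and> metric_on M d \<and> (\<forall>x\<in>M. 0 \<le> f x) \<and> 1 \<le> n \<and>
     (\<forall>i<n. \<Omega> i \<subseteq> M \<and> \<Omega> i \<noteq> {}) \<and> E \<subseteq> Pow {..<n}"

text \<open>Deterministic online algorithm: F xs = set of open facilities after the clients xs have
  arrived (only grows, irrevocable), \<sigma> (xs @ [x]) = open facility to which the newly arrived
  client x is (irrevocably) connected.  Both may depend on the known instance.\<close>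
definition online_alg :: "nat set \<Rightarrow> (nat list \<Rightarrow> nat set) \<Rightarrow> (nat list \<Rightarrow> nat) \<Rightarrow> bool" where
  "online_alg M F \<sigma> \<longleftrightarrow>
     (\<forall>xs. set xs \<subseteq> M \<longrightarrow> F xs \<subseteq> M) \<and>
     (\<forall>xs x. set xs \<subseteq> M \<and> x \<in> M \<longrightarrow> F xs \<subseteq> F (xs @ [x]) \<and> \<sigma> (xs @ [x]) \<in> F (xs @ [x]))"

definition alg_cost ::
  "(nat \<Rightarrow> nat \<Rightarrow> real) \<Rightarrow> (nat \<Rightarrow> real) \<Rightarrow> (nat list \<Rightarrow> nat set) \<Rightarrow> (nat list \<Rightarrow> nat)
     \<Rightarrow> nat list \<Rightarrow> real" where
  "alg_cost d f F \<sigma> u =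
     (\<Sum>x\<in>F u. f x) + (\<Sum>t<length u. d (u ! t) (\<sigma> (take (Suc t) u)))"

definition opt_cost :: "nat set \<Rightarrow> (nat \<Rightarrow> nat \<Rightarrow> real) \<Rightarrow> (nat \<Rightarrow> real) \<Rightarrow> nat list \<Rightarrow> real" where
  "opt_cost M d f u =
     Min {(\<Sum>x\<in>S. f x) + (\<Sum>t<length u. Min (d (u ! t) ` S)) | S. S \<subseteq> M \<and> S \<noteq> {}}"

text \<open>Randomized online algorithm = probability distribution R over deterministic online
  algorithms (random seed independent of the input); its expected cost on the MRF instance.\<close>
definition rand_alg_expected_cost ::
  "nat set \<Rightarrow> (nat \<Rightarrow> nat \<Rightarrow> real) \<Rightarrow> (nat \<Rightarrow> real) \<Rightarrow> nat \<Rightarrow> (nat \<Rightarrow> nat set)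
     \<Rightarrow> (nat \<Rightarrow> nat \<Rightarrow> real) \<Rightarrow> nat set set \<Rightarrow> (nat set \<Rightarrow> (nat \<Rightarrow> nat) \<Rightarrow> real)
     \<Rightarrow> ((nat list \<Rightarrow> nat set) \<times> (nat list \<Rightarrow> nat)) pmf \<Rightarrow> real" where
  "rand_alg_expected_cost M d f n \<Omega> \<psi>1 E \<psi>E R =
     measure_pmf.expectation R (\<lambda>(F, \<sigma>). mrf_expect n \<Omega> \<psi>1 E \<psi>E (alg_cost d f F \<sigma>))"

end

theory Submission
  imports Defs
begin

text \<open>The hard instance is an h-ary hierarchically well-separated tree of depth h: its leaves
  are the base-h numbers x < h^h with h digits, the level-i cell of x is the prefix of its first
  i + 1 digits, and two leaves whose deepest common cell has level k - 1 are at distance h^-k.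
  Opening costs are 1. The arrival sequence of a leaf x has h phases; in phase i, h^i clients
  arrive at the representative of the level-i cell of x. Opening x alone serves it at cost 2.
  Before phase i an online algorithm has only seen the level-(i-1) cell of x, so each facility it
  has opened lies in the level-i cell of x for at most a 1/h fraction of the leaves; in every
  other phase it pays at least 1, either for a new facility or for h^i connections of length
  h^-i. Averaging over x it pays at least h/2.

  The arrival distribution is a chain MRF whose pair potentials give weight h^(-4h) to every
  pair of consecutive clients that no arrival sequence produces. Almost all of its mass is then
  uniform over the h^h arrival sequences, while the weighted maximum degree is at most twice the
  potential 4 h ln h, so that Delta / ln Delta <= 8 h.\<close>


section \<open>A hierarchically well-separated tree\<close>

definition cell :: "nat \<Rightarrow> nat \<Rightarrow> nat \<Rightarrow> nat" where
  "cell h i x = x div h ^ (h - Suc i)"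

definition cell_rep :: "nat \<Rightarrow> nat \<Rightarrow> nat \<Rightarrow> nat" where
  "cell_rep h i x = cell h i x * h ^ (h - Suc i)"

definition common_depth :: "nat \<Rightarrow> nat \<Rightarrow> nat \<Rightarrow> nat" where
  "common_depth h x y = card {i. i < h \<and> cell h i x = cell h i y}"

definition hst_dist :: "nat \<Rightarrow> nat \<Rightarrow> nat \<Rightarrow> real" where
  "hst_dist h x y = (if x = y then 0 else (1 / real h) ^ common_depth h x y)"

lemma cell_coarsen:
  assumes "i \<le> j" "j < h"
  shows "cell h i x = cell h j x div h ^ (j - i)"
proof -
  have "h ^ (h - Suc i) = h ^ (h - Suc j) * h ^ (j - i)"
    using assms by (simp flip: power_add)
  then show ?thesis unfolding cell_def by (simp only: div_mult2_eq)
qed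

lemma cell_eq_iff_less_common_depth:
  assumes "i < h"
  shows "cell h i x = cell h i y \<longleftrightarrow> i < common_depth h x y"
proof
  assume eq: "cell h i x = cell h i y"
  have "{..i} \<subseteq> {j. j < h \<and> cell h j x = cell h j y}"
  proof
    fix j assume "j \<in> {..i}"
    then show "j \<in> {j. j < h \<and> cell h j x = cell h j y}"
      using assms eq cell_coarsen[of j i h x] cell_coarsen[of j i h y] by simp
  qed
  from card_mono[OF _ this] show "i < common_depth h x y"
    unfolding common_depth_def by simp
next
  assume less: "i < common_depth h x y"
  have "\<not> {j. j < h \<and> cell h j x = cell h j y} \<subseteq> {..<i}"
  proof
    assume "{j. j < h \<and> cell h j x = cell h j y} \<subseteq> {..<i}"
    from card_mono[OF _ this] less show False
      unfolding common_depth_def by simp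
  qed
  then obtain j where "j < h" "cell h j x = cell h j y" "\<not> j < i"
    by blast
  then show "cell h i x = cell h i y"
    using cell_coarsen[of i j h x] cell_coarsen[of i j h y] by simp
qed

lemma common_depth_le: "common_depth h x y \<le> h"
proof -
  have "{i. i < h \<and> cell h i x = cell h i y} \<subseteq> {..<h}" by auto
  from card_mono[OF _ this] show ?thesis
    unfolding common_depth_def by simp
qed

lemma common_depth_min: "min (common_depth h x y) (common_depth h y z) \<le> common_depth h x z"
proof -
  have "{..<min (common_depth h x y) (common_depth h y z)} \<subseteq> {i. i < h \<and> cell h i x = cell h i z}"
  proof
    fix i assume "i \<in> {..<min (common_depth h x y) (common_depth h y z)}"
    moreover from this have "i < h" using common_depth_le[of h x y] by simp
    ultimately show "i \<in> {i. i < h \<and> cell h i x = cell h i z}"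
      by (simp add: cell_eq_iff_less_common_depth[symmetric])
  qed
  from card_mono[OF _ this] show ?thesis
    unfolding common_depth_def by simp
qed

lemma hst_dist_nonneg: "0 \<le> hst_dist h x y"
  unfolding hst_dist_def by simp

lemma hst_dist_le_one: "1 \<le> h \<Longrightarrow> hst_dist h x y \<le> 1"
  unfolding hst_dist_def by (auto intro!: power_le_one)

lemma hst_dist_ge:
  assumes "i < h" "cell h i x \<noteq> cell h i y"
  shows "(1 / real h) ^ i \<le> hst_dist h x y"
proof -
  have "x \<noteq> y" using assms(2) by auto
  with assms show ?thesis
    by (auto simp: hst_dist_def cell_eq_iff_less_common_depth not_less intro!: power_decreasing)
qed

lemma hst_dist_le:
  assumes "i < h" "cell h i x = cell h i y"
  shows "hst_dist h x y \<le> (1 / real h) ^ Suc i"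
proof -
  have "Suc i \<le> common_depth h x y" using assms by (simp add: cell_eq_iff_less_common_depth)
  then show ?thesis
    unfolding hst_dist_def using assms(1) by (auto intro!: power_decreasing simp del: power_Suc)
qed

lemma hst_dist_triangle:
  assumes "2 \<le> h"
  shows "hst_dist h x z \<le> hst_dist h x y + hst_dist h y z"
proof -
  have base: "0 \<le> 1 / real h" "1 / real h \<le> 1" using assms by auto
  have "(1 / real h) ^ common_depth h x z \<le> (1 / real h) ^ min (common_depth h x y) (common_depth h y z)"
    by (rule power_decreasing[OF common_depth_min base])
  also have "\<dots> \<le> (1 / real h) ^ common_depth h x y + (1 / real h) ^ common_depth h y z"
    by (simp add: min_def)
  finally show ?thesis
    by (auto simp: hst_dist_def)
qed

lemma hst_dist_commute: "hst_dist h x y = hst_dist h y x"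
proof -
  have "{i. i < h \<and> cell h i x = cell h i y} = {i. i < h \<and> cell h i y = cell h i x}" by auto
  then show ?thesis unfolding hst_dist_def common_depth_def by auto
qed

lemma metric_on_hst_dist:
  assumes "2 \<le> h"
  shows "metric_on M (hst_dist h)"
proof -
  have "hst_dist h x y = 0 \<longleftrightarrow> x = y" for x y
    using assms by (simp add: hst_dist_def)
  then show ?thesis
    unfolding metric_on_def
    by (simp add: hst_dist_nonneg hst_dist_triangle[OF assms]) (use hst_dist_commute in blast)
qed

lemma cell_cell_rep:
  assumes "1 \<le> h"
  shows "cell h i (cell_rep h i x) = cell h i x"
proof -
  have "h ^ (h - Suc i) \<noteq> 0" using assms by simp
  then show ?thesis unfolding cell_rep_def by (subst cell_def) simp
qed

lemma cell_rep_cell_rep: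
  assumes "i \<le> j" "j < h"
  shows "cell_rep h i (cell_rep h j x) = cell_rep h i x"
proof -
  have "1 \<le> h" using assms by simp
  then have "cell h i (cell_rep h j x) = cell h i x"
    using assms by (simp add: cell_coarsen[of i j h] cell_cell_rep)
  then show ?thesis unfolding cell_rep_def by simp
qed

lemma cell_rep_le: "cell_rep h i x \<le> x"
  unfolding cell_rep_def cell_def by (rule div_times_less_eq_dividend)

lemma cell_rep_last: "1 \<le> h \<Longrightarrow> cell_rep h (h - 1) x = x"
  by (simp add: cell_rep_def cell_def)

lemma cell_rep_zero [simp]: "cell_rep h i 0 = 0"
  by (simp add: cell_rep_def cell_def)

section \<open>The arrival sequences\<close>

definition phase_list :: "nat \<Rightarrow> nat \<Rightarrow> nat list" where
  "phase_list h k = concat (map (\<lambda>i. replicate (h ^ i) i) [0..<k])"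

definition phase_start :: "nat \<Rightarrow> nat \<Rightarrow> nat" where
  "phase_start h k = (\<Sum>i<k. h ^ i)"

definition horizon :: "nat \<Rightarrow> nat" where
  "horizon h = phase_start h h"

definition phase :: "nat \<Rightarrow> nat \<Rightarrow> nat" where
  "phase h t = phase_list h h ! t"

definition arrivals :: "nat \<Rightarrow> nat \<Rightarrow> nat list" where
  "arrivals h x = map (\<lambda>i. cell_rep h i x) (phase_list h h)"

lemma phase_list_0 [simp]: "phase_list h 0 = []"
  by (simp add: phase_list_def)

lemma phase_list_Suc: "phase_list h (Suc k) = phase_list h k @ replicate (h ^ k) k"
  by (simp add: phase_list_def)

lemma phase_start_Suc: "phase_start h (Suc k) = phase_start h k + h ^ k"
  by (simp add: phase_start_def)

lemma length_phase_list [simp]: "length (phase_list h k) = phase_start h k"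
  by (induction k) (simp_all add: phase_list_def phase_start_def)

lemma phase_start_mono: "k \<le> K \<Longrightarrow> phase_start h k \<le> phase_start h K"
  unfolding phase_start_def by (rule sum_mono2) auto

lemma phase_start_le_power: "2 \<le> h \<Longrightarrow> phase_start h k \<le> h ^ k"
proof (induction k)
  case (Suc k)
  then have "phase_start h (Suc k) \<le> 2 * h ^ k" by (simp add: phase_start_Suc)
  also have "\<dots> \<le> h ^ Suc k" using Suc.prems by simp
  finally show ?case .
qed (simp add: phase_start_def)

lemma two_le_power_self:
  assumes "2 \<le> h"
  shows "2 \<le> h ^ h"
proof -
  have "h ^ 1 \<le> h ^ h" using assms by (intro power_increasing) auto
  with assms show ?thesis by (simp only: power_one_right)
qed

lemma two_le_horizon: "2 \<le> h \<Longrightarrow> 2 \<le> horizon h"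
  using phase_start_mono[of 2 h h] by (simp add: horizon_def phase_start_def numeral_2_eq_2)

lemma take_phase_list: "k \<le> K \<Longrightarrow> take (phase_start h k) (phase_list h K) = phase_list h k"
proof (induction K)
  case (Suc K)
  show ?case
  proof (cases "k = Suc K")
    case False
    with Suc.prems have "k \<le> K" by simp
    with Suc.IH phase_start_mono[of k K h] show ?thesis by (simp add: phase_list_Suc)
  qed simp
qed simp

lemma set_phase_list: "set (phase_list h k) \<subseteq> {..<k}"
  by (induction k) (auto simp: phase_list_Suc)

lemma sorted_phase_list: "sorted (phase_list h k)"
proof (induction k)
  case (Suc k)
  with set_phase_list[of h k] show ?case by (auto simp: phase_list_Suc sorted_append)
qed (simp add: phase_list_def)

lemma phase_eq:
  assumes "i < h" "phase_start h i \<le> t" "t < phase_start h (Suc i)"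
  shows "phase h t = i"
proof -
  have "phase h t = take (phase_start h (Suc i)) (phase_list h h) ! t"
    using assms(3) by (simp add: phase_def)
  also have "\<dots> = phase_list h (Suc i) ! t"
    using assms(1) by (simp only: take_phase_list Suc_leI)
  also have "\<dots> = i"
    using assms(2,3) by (simp add: phase_list_Suc phase_start_Suc nth_append)
  finally show ?thesis .
qed

lemma phase_mono: "t \<le> t' \<Longrightarrow> t' < horizon h \<Longrightarrow> phase h t \<le> phase h t'"
  using sorted_phase_list[of h h] by (simp add: phase_def horizon_def sorted_iff_nth_mono)

lemma phase_less: "t < horizon h \<Longrightarrow> phase h t < h"
proof -
  assume "t < horizon h"
  then have "phase h t \<in> set (phase_list h h)"
    by (simp add: phase_def horizon_def)
  with set_phase_list[of h h] show ?thesis by auto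
qed

lemma phase_last:
  assumes "1 \<le> h"
  shows "phase h (horizon h - 1) = h - 1"
proof (rule phase_eq)
  have pos: "0 < h ^ (h - 1)" using assms by simp
  have last: "phase_start h (Suc (h - 1)) = horizon h" using assms by (simp add: horizon_def)
  then have "horizon h = phase_start h (h - 1) + h ^ (h - 1)" by (simp only: phase_start_Suc)
  with pos last show "phase_start h (h - 1) \<le> horizon h - 1"
    and "horizon h - 1 < phase_start h (Suc (h - 1))"
    by linarith+
qed (use assms in simp)

lemma sum_phase: "(\<Sum>t<horizon h. g (phase h t)) = (\<Sum>i<h. real (h ^ i) * g i)"
proof -
  have "sum_list (map g (phase_list h k)) = (\<Sum>i<k. real (h ^ i) * g i)" for k
    by (induction k) (simp_all add: phase_list_Suc sum_list_replicate)
  then show ?thesis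
    by (simp add: sum_list_sum_nth phase_def horizon_def atLeast0LessThan)
qed

lemma sum_by_phases:
  "(\<Sum>t<phase_start h k. g t) = (\<Sum>i<k. \<Sum>t\<in>{phase_start h i..<phase_start h (Suc i)}. g t)"
proof (induction k)
  case (Suc k)
  then show ?case
    using sum.atLeastLessThan_concat[of 0 "phase_start h k" "phase_start h (Suc k)" g]
      phase_start_mono[of k "Suc k" h]
    by (simp add: atLeast0LessThan)
qed (simp add: phase_start_def)

lemma length_arrivals [simp]: "length (arrivals h x) = horizon h"
  by (simp add: arrivals_def horizon_def)

lemma nth_arrivals: "t < horizon h \<Longrightarrow> arrivals h x ! t = cell_rep h (phase h t) x"
  by (simp add: arrivals_def phase_def horizon_def)

lemma take_arrivals:
  "i \<le> h \<Longrightarrow> take (phase_start h i) (arrivals h x) = map (\<lambda>j. cell_rep h j x) (phase_list h i)"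
  by (simp add: arrivals_def take_map take_phase_list)

lemma set_arrivals: "x < h ^ h \<Longrightarrow> set (arrivals h x) \<subseteq> {..<h ^ h}"
  unfolding arrivals_def using cell_rep_le[of h _ x] by (auto intro: le_less_trans)

lemma inj_on_arrivals:
  assumes h: "2 \<le> h"
  shows "inj_on (arrivals h) X"
proof (rule inj_onI)
  fix x y assume "arrivals h x = arrivals h y"
  then have "arrivals h x ! (horizon h - 1) = arrivals h y ! (horizon h - 1)" by simp
  moreover have "horizon h - 1 < horizon h" using two_le_horizon[OF h] by simp
  ultimately show "x = y"
    using h phase_last[of h] cell_rep_last[of h] by (simp add: nth_arrivals)
qed

section \<open>Online algorithms on the arrival sequences\<close>

lemma online_alg_facilities_subset: "online_alg M F \<sigma> \<Longrightarrow> set xs \<subseteq> M \<Longrightarrow> F xs \<subseteq> M"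
  unfolding online_alg_def by blast

lemma online_alg_step:
  assumes "online_alg M F \<sigma>" "set u \<subseteq> M" "t < length u"
  shows "F (take t u) \<subseteq> F (take (Suc t) u)" and "\<sigma> (take (Suc t) u) \<in> F (take (Suc t) u)"
proof -
  have "take (Suc t) u = take t u @ [u ! t]" using assms(3) by (simp add: take_Suc_conv_app_nth)
  moreover have "set (take t u) \<subseteq> M" using assms(2) by (meson order_trans set_take_subset)
  moreover have "u ! t \<in> M" using assms(2,3) by auto
  ultimately show "F (take t u) \<subseteq> F (take (Suc t) u)" and "\<sigma> (take (Suc t) u) \<in> F (take (Suc t) u)"
    using assms(1) unfolding online_alg_def by metis+
qed

lemma online_alg_facilities_mono:
  assumes "online_alg M F \<sigma>" "set u \<subseteq> M" "a \<le> b" "b \<le> length u"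
  shows "F (take a u) \<subseteq> F (take b u)"
  using assms(3,4)
proof (induction b)
  case (Suc b)
  show ?case
  proof (cases "a = Suc b")
    case False
    with Suc.prems Suc.IH online_alg_step(1)[OF assms(1,2), of b] show ?thesis by auto
  qed simp
qed simp

lemma alg_cost_unit_opening:
  "alg_cost d (\<lambda>_. 1) F \<sigma> u = real (card (F u)) + (\<Sum>t<length u. d (u ! t) (\<sigma> (take (Suc t) u)))"
  by (simp add: alg_cost_def)

lemma alg_cost_nonneg:
  "(\<And>x. 0 \<le> f x) \<Longrightarrow> (\<And>x y. 0 \<le> d x y) \<Longrightarrow> 0 \<le> alg_cost d f F \<sigma> u"
  unfolding alg_cost_def by (intro add_nonneg_nonneg sum_nonneg) auto

lemma alg_cost_le:
  assumes h: "1 \<le> h" and alg: "online_alg {..<h ^ h} F \<sigma>" and u: "set u \<subseteq> {..<h ^ h}"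
  shows "alg_cost (hst_dist h) (\<lambda>_. 1) F \<sigma> u \<le> real (h ^ h) + real (length u)"
proof -
  have "card (F u) \<le> h ^ h"
    using card_mono[OF _ online_alg_facilities_subset[OF alg u]] by simp
  then have "real (card (F u)) \<le> real (h ^ h)"
    by (simp only: of_nat_le_iff)
  moreover have "(\<Sum>t<length u. hst_dist h (u ! t) (\<sigma> (take (Suc t) u))) \<le> (\<Sum>t<length u. 1)"
    using hst_dist_le_one[OF h] by (intro sum_mono)
  then have "(\<Sum>t<length u. hst_dist h (u ! t) (\<sigma> (take (Suc t) u))) \<le> real (length u)"
    by simp
  ultimately show ?thesis
    unfolding alg_cost_unit_opening by linarith
qed

definition opened_before :: "nat \<Rightarrow> (nat list \<Rightarrow> nat set) \<Rightarrow> nat \<Rightarrow> nat \<Rightarrow> nat set" where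
  "opened_before h F x i = F (take (phase_start h i) (arrivals h x))"

definition lucky :: "nat \<Rightarrow> (nat list \<Rightarrow> nat set) \<Rightarrow> nat \<Rightarrow> nat \<Rightarrow> bool" where
  "lucky h F x i \<longleftrightarrow> (\<exists>w\<in>opened_before h F x i. cell h i w = cell h i x)"

lemma opened_before_horizon: "opened_before h F x h = F (arrivals h x)"
  by (simp add: opened_before_def flip: horizon_def)

context
  fixes h :: nat and F :: "nat list \<Rightarrow> nat set" and \<sigma> :: "nat list \<Rightarrow> nat" and x :: nat
  assumes h: "2 \<le> h" and alg: "online_alg {..<h ^ h} F \<sigma>" and x: "x < h ^ h"
begin

lemma arrivals_in_space: "set (arrivals h x) \<subseteq> {..<h ^ h}"
  using set_arrivals[OF x] .

lemma finite_facilities: "finite (F (take k (arrivals h x)))"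
  using online_alg_facilities_subset[OF alg] arrivals_in_space
  by (meson finite_lessThan finite_subset order_trans set_take_subset)

lemma opened_before_mono:
  "i \<le> j \<Longrightarrow> j \<le> h \<Longrightarrow> opened_before h F x i \<subseteq> opened_before h F x j"
  unfolding opened_before_def
  using online_alg_facilities_mono[OF alg arrivals_in_space] phase_start_mono[of i j h]
    phase_start_mono[of j h h]
  by (simp add: horizon_def)

text \<open>Each of the h^i clients of phase i is connected to a facility outside the level-i
  cell of x, at distance at least h^-i.\<close>
lemma connection_cost_unlucky_phase:
  assumes i: "i < h" and unlucky: "\<not> lucky h F x i"
    and no_open: "opened_before h F x (Suc i) = opened_before h F x i"
  shows "1 \<le> (\<Sum>t\<in>{phase_start h i..<phase_start h (Suc i)}.
                hst_dist h (arrivals h x ! t) (\<sigma> (take (Suc t) (arrivals h x))))"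
proof -
  have "(1 / real h) ^ i \<le> hst_dist h (arrivals h x ! t) (\<sigma> (take (Suc t) (arrivals h x)))"
    if t: "t \<in> {phase_start h i..<phase_start h (Suc i)}" for t
  proof -
    let ?w = "\<sigma> (take (Suc t) (arrivals h x))"
    have t_le: "Suc t \<le> phase_start h (Suc i)" and t_less: "t < horizon h"
      using t phase_start_mono[of "Suc i" h h] i by (auto simp: horizon_def)
    have "?w \<in> F (take (Suc t) (arrivals h x))"
      using online_alg_step(2)[OF alg arrivals_in_space] t_less by simp
    also have "\<dots> \<subseteq> opened_before h F x (Suc i)"
      unfolding opened_before_def
      using online_alg_facilities_mono[OF alg arrivals_in_space t_le] t_le t_less
        phase_start_mono[of "Suc i" h h] i
      by (simp add: horizon_def)
    finally have "cell h i ?w \<noteq> cell h i x"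
      using unlucky no_open by (auto simp: lucky_def)
    moreover have "arrivals h x ! t = cell_rep h i x"
      using t i by (simp add: nth_arrivals[OF t_less] phase_eq)
    ultimately show ?thesis
      using hst_dist_ge[OF i] cell_cell_rep[of h i x] h by simp
  qed
  then have "(\<Sum>t\<in>{phase_start h i..<phase_start h (Suc i)}. (1 / real h) ^ i)
      \<le> (\<Sum>t\<in>{phase_start h i..<phase_start h (Suc i)}.
            hst_dist h (arrivals h x ! t) (\<sigma> (take (Suc t) (arrivals h x))))"
    by (rule sum_mono)
  moreover have "card {phase_start h i..<phase_start h (Suc i)} = h ^ i"
    by (simp add: phase_start_Suc)
  then have "(\<Sum>t\<in>{phase_start h i..<phase_start h (Suc i)}. (1 / real h) ^ i) = 1"
    using h by (simp add: power_one_over)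
  ultimately show ?thesis by linarith
qed

lemma phase_cost_ge:
  assumes i: "i < h"
  shows "1 - of_bool (lucky h F x i)
    \<le> (real (card (opened_before h F x (Suc i))) - real (card (opened_before h F x i)))
       + (\<Sum>t\<in>{phase_start h i..<phase_start h (Suc i)}.
            hst_dist h (arrivals h x ! t) (\<sigma> (take (Suc t) (arrivals h x))))"
proof -
  have sub: "opened_before h F x i \<subseteq> opened_before h F x (Suc i)"
    using opened_before_mono i by simp
  have fin: "finite (opened_before h F x (Suc i))"
    unfolding opened_before_def by (rule finite_facilities)
  have conn: "0 \<le> (\<Sum>t\<in>{phase_start h i..<phase_start h (Suc i)}.
            hst_dist h (arrivals h x ! t) (\<sigma> (take (Suc t) (arrivals h x))))"
    by (simp add: sum_nonneg hst_dist_nonneg)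
  consider "lucky h F x i" | "opened_before h F x i \<subset> opened_before h F x (Suc i)"
    | "\<not> lucky h F x i" "opened_before h F x (Suc i) = opened_before h F x i"
    using sub by blast
  then show ?thesis
  proof cases
    case 1
    then show ?thesis using card_mono[OF fin sub] conn by simp
  next
    case 2
    then have "card (opened_before h F x i) < card (opened_before h F x (Suc i))"
      by (rule psubset_card_mono[OF fin])
    with conn show ?thesis by simp
  next
    case 3
    then show ?thesis using connection_cost_unlucky_phase[OF i] by simp
  qed
qed

lemma unlucky_phases_le_alg_cost:
  "(\<Sum>i<h. 1 - of_bool (lucky h F x i)) \<le> alg_cost (hst_dist h) (\<lambda>_. 1) F \<sigma> (arrivals h x)"
proof -
  let ?c = "\<lambda>i. real (card (opened_before h F x i))"
  let ?d = "\<lambda>t. hst_dist h (arrivals h x ! t) (\<sigma> (take (Suc t) (arrivals h x)))"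
  have "(\<Sum>i<h. 1 - of_bool (lucky h F x i))
      \<le> (\<Sum>i<h. (?c (Suc i) - ?c i) + (\<Sum>t\<in>{phase_start h i..<phase_start h (Suc i)}. ?d t))"
    by (intro sum_mono phase_cost_ge) simp
  also have "\<dots> = ?c h - ?c 0 + (\<Sum>t<horizon h. ?d t)"
    by (simp add: sum.distrib sum_lessThan_telescope[of ?c] sum_by_phases horizon_def)
  also have "\<dots> \<le> alg_cost (hst_dist h) (\<lambda>_. 1) F \<sigma> (arrivals h x)"
    by (simp add: alg_cost_unit_opening opened_before_horizon)
  finally show ?thesis .
qed

lemma card_opened_before_le_alg_cost:
  assumes "i \<le> h"
  shows "real (card (opened_before h F x i)) \<le> alg_cost (hst_dist h) (\<lambda>_. 1) F \<sigma> (arrivals h x)"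
proof -
  have "card (opened_before h F x i) \<le> card (F (arrivals h x))"
    using card_mono[OF _ opened_before_mono[OF assms order_refl]] finite_facilities[of "horizon h"]
    by (simp add: opened_before_horizon)
  moreover have "0 \<le> (\<Sum>t<horizon h. hst_dist h (arrivals h x ! t) (\<sigma> (take (Suc t) (arrivals h x))))"
    by (simp add: sum_nonneg hst_dist_nonneg)
  ultimately show ?thesis
    by (simp add: alg_cost_unit_opening)
qed

end

lemma sum_lessThan_blocks:
  fixes g :: "nat \<Rightarrow> real"
  assumes const: "\<And>x y. x div k = y div k \<Longrightarrow> g x = g y"
  shows "(\<Sum>x<A * k. g x) = (\<Sum>b<A. real k * g (b * k))"
proof (cases "k = 0")
  case False
  have "(\<Sum>b<A. \<Sum>x\<in>{b * k..<b * k + k}. g x) = (\<Sum>b<A. \<Sum>x\<in>{b * k..<b * k + k}. g (b * k))"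
  proof (intro sum.cong refl const)
    fix b x assume "x \<in> {b * k..<b * k + k}"
    with False have "x div k = b"
      by (intro div_nat_eqI) (simp_all add: algebra_simps)
    with False show "x div k = b * k div k"
      by simp
  qed
  then have "(\<Sum>b<A. \<Sum>x\<in>{b * k..<b * k + k}. g x) = (\<Sum>b<A. real k * g (b * k))"
    by simp
  then show ?thesis
    by (simp only: sum.nat_group)
qed simp

lemma card_hit_cells_le:
  fixes m q b :: nat and \<phi> :: "nat \<Rightarrow> nat set"
  assumes q: "0 < q" and const: "\<And>x y. x div (m * q) = y div (m * q) \<Longrightarrow> \<phi> x = \<phi> y"
    and fin: "finite (\<phi> (b * m * q))"
  shows "card {c \<in> {b * m..<b * m + m}. \<exists>w\<in>\<phi> (c * q). w div q = c} \<le> card (\<phi> (b * m * q))"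
proof -
  let ?D = "(\<lambda>w. w div q) ` \<phi> (b * m * q)"
  have "{c \<in> {b * m..<b * m + m}. \<exists>w\<in>\<phi> (c * q). w div q = c} \<subseteq> ?D"
  proof
    fix c assume c: "c \<in> {c \<in> {b * m..<b * m + m}. \<exists>w\<in>\<phi> (c * q). w div q = c}"
    have "\<phi> (c * q) = \<phi> (b * m * q)"
    proof (rule const)
      have "c div m = b" using c by (intro div_nat_eqI) (auto simp: mult.commute)
      moreover have "b * m div m = b" using c by auto
      ultimately show "c * q div (m * q) = b * m * q div (m * q)" using q by simp
    qed
    with c show "c \<in> ?D" by auto
  qed
  then have "card {c \<in> {b * m..<b * m + m}. \<exists>w\<in>\<phi> (c * q). w div q = c} \<le> card ?D"
    using fin by (intro card_mono) auto
  also have "\<dots> \<le> card (\<phi> (b * m * q))"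
    using fin by (rule card_image_le)
  finally show ?thesis .
qed

text \<open>A set \<phi> x that is constant on intervals of length m q meets at most card (\<phi> x) of
  the m subintervals of length q of each of them.\<close>
lemma sum_hits_le_sum_card:
  fixes m q A :: nat and \<phi> :: "nat \<Rightarrow> nat set"
  assumes m: "0 < m" and q: "0 < q"
    and const: "\<And>x y. x div (m * q) = y div (m * q) \<Longrightarrow> \<phi> x = \<phi> y"
    and fin: "\<And>x. x < A * m * q \<Longrightarrow> finite (\<phi> x)"
  shows "real m * (\<Sum>x<A * m * q. of_bool (\<exists>w\<in>\<phi> x. w div q = x div q))
    \<le> (\<Sum>x<A * m * q. real (card (\<phi> x)))"
proof -
  let ?hit_at = "\<lambda>x. of_bool (\<exists>w\<in>\<phi> x. w div q = x div q) :: real"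
  let ?hit = "\<lambda>c. of_bool (\<exists>w\<in>\<phi> (c * q). w div q = c) :: real"
  have "(\<Sum>x<A * m * q. ?hit_at x) = (\<Sum>c<A * m. real q * ?hit_at (c * q))"
  proof (rule sum_lessThan_blocks)
    fix x y assume "x div q = y div q"
    moreover from this have "\<phi> x = \<phi> y"
      by (intro const) (simp add: div_mult2_eq mult.commute[of m])
    ultimately show "?hit_at x = ?hit_at y"
      by simp
  qed
  also have "\<dots> = (\<Sum>c<A * m. real q * ?hit c)"
    using q by simp
  also have "\<dots> = real q * (\<Sum>b<A. \<Sum>c\<in>{b * m..<b * m + m}. ?hit c)"
    by (simp only: sum_distrib_left[symmetric] sum.nat_group)
  also have "\<dots> \<le> real q * (\<Sum>b<A. real (card (\<phi> (b * m * q))))"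
  proof (intro mult_left_mono sum_mono)
    fix b assume "b \<in> {..<A}"
    then have "card {c \<in> {b * m..<b * m + m}. \<exists>w\<in>\<phi> (c * q). w div q = c} \<le> card (\<phi> (b * m * q))"
      using m q by (intro card_hit_cells_le const fin) auto
    then show "(\<Sum>c\<in>{b * m..<b * m + m}. ?hit c) \<le> real (card (\<phi> (b * m * q)))"
      by (simp add: Int_def conj_commute)
  qed simp
  finally have "real m * (\<Sum>x<A * m * q. ?hit_at x)
      \<le> real m * (real q * (\<Sum>b<A. real (card (\<phi> (b * m * q)))))"
    by (rule mult_left_mono) simp
  also have "\<dots> = (\<Sum>b<A. real (m * q) * real (card (\<phi> (b * (m * q)))))"
    by (simp add: sum_distrib_left mult.assoc)
  also have "\<dots> = (\<Sum>x<A * (m * q). real (card (\<phi> x)))"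
    by (rule sum_lessThan_blocks[symmetric]) (metis const)
  also have "\<dots> = (\<Sum>x<A * m * q. real (card (\<phi> x)))"
    by (simp only: mult.assoc)
  finally show ?thesis .
qed

lemma cell_eq_of_parent_eq:
  assumes "j < i" "i < h" "x div (h * h ^ (h - Suc i)) = y div (h * h ^ (h - Suc i))"
  shows "cell h j x = cell h j y"
proof -
  have "h - Suc j = Suc (h - Suc i) + (i - Suc j)" using assms(1,2) by simp
  then have "h ^ (h - Suc j) = h * h ^ (h - Suc i) * h ^ (i - Suc j)"
    by (simp only: power_add power_Suc)
  with assms(3) show ?thesis
    unfolding cell_def by (simp only: div_mult2_eq)
qed

lemma sum_lucky_le_sum_alg_cost:
  assumes h: "2 \<le> h" and alg: "online_alg {..<h ^ h} F \<sigma>" and i: "i < h"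
  shows "real h * (\<Sum>x<h ^ h. of_bool (lucky h F x i))
    \<le> (\<Sum>x<h ^ h. alg_cost (hst_dist h) (\<lambda>_. 1) F \<sigma> (arrivals h x))"
proof -
  let ?q = "h ^ (h - Suc i)"
  have "h ^ h = h ^ (i + Suc (h - Suc i))" using i by simp
  then have N: "h ^ i * h * ?q = h ^ h" by (simp add: power_add mult.assoc)
  have const: "opened_before h F x i = opened_before h F y i"
    if "x div (h * ?q) = y div (h * ?q)" for x y
  proof -
    have "cell_rep h j x = cell_rep h j y" if "j \<in> set (phase_list h i)" for j
      using that set_phase_list[of h i] cell_eq_of_parent_eq[OF _ i \<open>x div (h * ?q) = y div (h * ?q)\<close>]
      by (auto simp: cell_rep_def)
    then show ?thesis
      using i by (simp add: opened_before_def take_arrivals cong: map_cong)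
  qed
  have fin: "finite (opened_before h F x i)" if "x < h ^ i * h * ?q" for x
    unfolding opened_before_def using that[unfolded N] by (rule finite_facilities[OF h alg])
  have "real h * (\<Sum>x<h ^ i * h * ?q. of_bool (\<exists>w\<in>opened_before h F x i. w div ?q = x div ?q))
      \<le> (\<Sum>x<h ^ i * h * ?q. real (card (opened_before h F x i)))"
    using h by (intro sum_hits_le_sum_card const fin) simp_all
  then have "real h * (\<Sum>x<h ^ h. of_bool (\<exists>w\<in>opened_before h F x i. w div ?q = x div ?q))
      \<le> (\<Sum>x<h ^ h. real (card (opened_before h F x i)))"
    unfolding N .
  also have "\<dots> \<le> (\<Sum>x<h ^ h. alg_cost (hst_dist h) (\<lambda>_. 1) F \<sigma> (arrivals h x))"
    using card_opened_before_le_alg_cost[OF h alg] i by (intro sum_mono) simp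
  finally show ?thesis
    by (simp add: lucky_def cell_def)
qed

lemma sum_alg_cost_arrivals_ge:
  assumes h: "2 \<le> h" and alg: "online_alg {..<h ^ h} F \<sigma>"
  shows "real h * real (h ^ h) \<le> 2 * (\<Sum>x<h ^ h. alg_cost (hst_dist h) (\<lambda>_. 1) F \<sigma> (arrivals h x))"
proof -
  let ?cost = "\<Sum>x<h ^ h. alg_cost (hst_dist h) (\<lambda>_. 1) F \<sigma> (arrivals h x)"
  let ?L = "\<lambda>x i. of_bool (lucky h F x i) :: real"
  have "(\<Sum>x<h ^ h. \<Sum>i<h. ?L x i) = (\<Sum>i<h. \<Sum>x<h ^ h. ?L x i)"
    by (rule sum.swap)
  moreover have "(\<Sum>x<h ^ h. \<Sum>i<h. 1 - ?L x i) = real h * real (h ^ h) - (\<Sum>x<h ^ h. \<Sum>i<h. ?L x i)"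
    by (simp only: sum_subtractf sum_constant card_lessThan) simp
  ultimately have "real h * real (h ^ h) - (\<Sum>i<h. \<Sum>x<h ^ h. ?L x i) = (\<Sum>x<h ^ h. \<Sum>i<h. 1 - ?L x i)"
    by linarith
  also have "\<dots> \<le> ?cost"
    using unlucky_phases_le_alg_cost[OF h alg] by (intro sum_mono) simp
  finally have deficit: "real h * real (h ^ h) - (\<Sum>i<h. \<Sum>x<h ^ h. ?L x i) \<le> ?cost" .
  have "real h * (\<Sum>i<h. \<Sum>x<h ^ h. ?L x i) = (\<Sum>i<h. real h * (\<Sum>x<h ^ h. ?L x i))"
    by (rule sum_distrib_left)
  also have "\<dots> \<le> (\<Sum>i<h. ?cost)"
    by (rule sum_mono) (rule sum_lucky_le_sum_alg_cost[OF h alg], simp)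
  also have "\<dots> = real h * ?cost"
    by simp
  finally have "(\<Sum>i<h. \<Sum>x<h ^ h. ?L x i) \<le> ?cost"
    using h by simp
  with deficit show ?thesis
    by linarith
qed

section \<open>The offline optimum\<close>

lemma opt_cost_eq_Min_image:
  "opt_cost M d f u = Min ((\<lambda>S. (\<Sum>x\<in>S. f x) + (\<Sum>t<length u. Min (d (u ! t) ` S))) ` {S. S \<subseteq> M \<and> S \<noteq> {}})"
  unfolding opt_cost_def by (intro arg_cong[where f = Min]) auto

lemma opt_cost_le:
  assumes "finite M" "S \<subseteq> M" "S \<noteq> {}"
  shows "opt_cost M d f u \<le> (\<Sum>x\<in>S. f x) + (\<Sum>t<length u. Min (d (u ! t) ` S))"
  unfolding opt_cost_eq_Min_image using assms by (intro Min_le) auto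

lemma one_le_opt_cost:
  assumes M: "finite M" "M \<noteq> {}" and d: "\<And>x y. 0 \<le> d x y"
  shows "1 \<le> opt_cost M d (\<lambda>_. 1) u"
proof -
  have "1 \<le> (\<Sum>x\<in>S. 1) + (\<Sum>t<length u. Min (d (u ! t) ` S))" if S: "S \<subseteq> M" "S \<noteq> {}" for S
  proof -
    have fin: "finite S" using S M finite_subset by blast
    then have "1 \<le> (\<Sum>x\<in>S. 1 :: real)" using S(2) by (simp add: Suc_leI card_gt_0_iff)
    moreover have "0 \<le> (\<Sum>t<length u. Min (d (u ! t) ` S))"
      using fin S(2) d by (intro sum_nonneg) (auto intro!: Min.boundedI)
    ultimately show ?thesis by simp
  qed
  then show ?thesis
    unfolding opt_cost_eq_Min_image using M by (subst Min_ge_iff) auto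
qed

lemma opt_cost_le_length:
  assumes "1 \<le> h"
  shows "opt_cost {..<h ^ h} (hst_dist h) (\<lambda>_. 1) u \<le> 1 + real (length u)"
proof -
  have "opt_cost {..<h ^ h} (hst_dist h) (\<lambda>_. 1) u \<le> 1 + (\<Sum>t<length u. hst_dist h (u ! t) 0)"
    using opt_cost_le[of "{..<h ^ h}" "{0}" "hst_dist h" "\<lambda>_. 1" u] assms by simp
  also have "\<dots> \<le> 1 + (\<Sum>t<length u. 1)"
    using hst_dist_le_one[OF assms] by (intro add_left_mono sum_mono)
  finally show ?thesis by simp
qed

text \<open>Opening the leaf x alone costs 1, and the h^i clients of phase i then pay at most
  h^-(i+1) each.\<close>
lemma opt_cost_arrivals_le:
  assumes h: "1 \<le> h" and x: "x < h ^ h"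
  shows "opt_cost {..<h ^ h} (hst_dist h) (\<lambda>_. 1) (arrivals h x) \<le> 2"
proof -
  have "opt_cost {..<h ^ h} (hst_dist h) (\<lambda>_. 1) (arrivals h x)
      \<le> 1 + (\<Sum>t<horizon h. hst_dist h (cell_rep h (phase h t) x) x)"
    using opt_cost_le[of "{..<h ^ h}" "{x}" "hst_dist h" "\<lambda>_. 1" "arrivals h x"] x
    by (simp add: nth_arrivals)
  also have "(\<Sum>t<horizon h. hst_dist h (cell_rep h (phase h t) x) x)
      \<le> (\<Sum>t<horizon h. (1 / real h) ^ Suc (phase h t))"
    using phase_less hst_dist_le cell_cell_rep[OF h] by (intro sum_mono) simp
  also have "\<dots> = (\<Sum>i<h. real (h ^ i) * (1 / real h) ^ Suc i)"
    by (rule sum_phase)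
  also have "\<dots> = 1"
    using h by (simp add: power_one_over)
  finally show ?thesis by simp
qed

section \<open>Markov random fields and expectations\<close>

lemma sum_lists_chain_prod:
  fixes a :: "nat \<Rightarrow> 'a \<Rightarrow> 'a \<Rightarrow> real"
  assumes col: "\<And>t y. y \<in> X \<Longrightarrow> (\<Sum>x\<in>X. a t x y) = c"
  shows "(\<Sum>u\<in>{xs. set xs \<subseteq> X \<and> length xs = Suc k}. \<Prod>t<k. a t (u ! t) (u ! Suc t))
    = real (card X) * c ^ k"
  using col
proof (induction k arbitrary: a)
  case 0
  have "{xs. set xs \<subseteq> X \<and> length xs = Suc 0} = (\<lambda>x. [x]) ` X"
    by (auto simp: length_Suc_conv)
  moreover have "inj_on (\<lambda>x. [x]) X" by (simp add: inj_on_def)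
  ultimately show ?case by (simp add: sum.reindex card_image)
next
  case (Suc k)
  let ?L = "{xs. set xs \<subseteq> X \<and> length xs = Suc k}"
  let ?P = "\<lambda>v. \<Prod>t<k. a (Suc t) (v ! t) (v ! Suc t)"
  have inj: "inj_on (\<lambda>(xs, x). x # xs) (?L \<times> X)" by (auto simp: inj_on_def)
  have "(\<Sum>u\<in>{xs. set xs \<subseteq> X \<and> length xs = Suc (Suc k)}. \<Prod>t<Suc k. a t (u ! t) (u ! Suc t))
      = (\<Sum>(v, x)\<in>?L \<times> X. a 0 x (v ! 0) * ?P v)"
    unfolding lists_length_Suc_eq[of X "Suc k"] sum.reindex[OF inj]
    by (intro sum.cong refl) (auto simp: prod.lessThan_Suc_shift simp del: prod.lessThan_Suc)
  also have "\<dots> = (\<Sum>v\<in>?L. (\<Sum>x\<in>X. a 0 x (v ! 0)) * ?P v)"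
    by (simp add: sum.cartesian_product[symmetric] sum_distrib_right)
  also have "\<dots> = (\<Sum>v\<in>?L. c * ?P v)"
    using Suc.prems by (intro sum.cong refl) (auto simp: length_Suc_conv)
  also have "\<dots> = c * (real (card X) * c ^ k)"
    using Suc.IH[of "\<lambda>t. a (Suc t)"] Suc.prems by (simp add: sum_distrib_left[symmetric])
  finally show ?case by simp
qed

lemma sum_weighted_le_split:
  fixes w g :: "'a \<Rightarrow> real"
  assumes S: "finite S" and V: "V \<subseteq> S" and w: "\<And>u. u \<in> S \<Longrightarrow> 0 \<le> w u"
    and g: "\<And>u. u \<in> S - V \<Longrightarrow> g u \<le> B"
  shows "(\<Sum>u\<in>S. w u * g u) \<le> (\<Sum>u\<in>V. w u * g u) + B * ((\<Sum>u\<in>S. w u) - (\<Sum>u\<in>V. w u))"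
proof -
  have "(\<Sum>u\<in>S - V. w u * g u) \<le> (\<Sum>u\<in>S - V. w u * B)"
    using w g by (intro sum_mono mult_left_mono) auto
  then show ?thesis
    using sum.subset_diff[OF V S, of "\<lambda>u. w u * g u"] sum.subset_diff[OF V S, of w]
    by (simp add: sum_distrib_left mult.commute)
qed

lemma mrf_support_const: "mrf_support n (\<lambda>_. X) = {xs. set xs \<subseteq> X \<and> length xs = n}"
  by (auto simp: mrf_support_def in_set_conv_nth subset_iff)

lemma mrf_Delta_ge:
  assumes "finite (mrf_support n \<Omega>)" "i < n" "u \<in> mrf_support n \<Omega>"
  shows "\<bar>\<Sum>e\<in>{e\<in>E. i \<in> e}. \<psi>E e (restrict (\<lambda>j. u ! j) e)\<bar> \<le> mrf_Delta n \<Omega> E \<psi>E"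
  unfolding mrf_Delta_def using assms by (intro Max_ge finite_image_set2) auto

lemma mrf_Delta_le:
  assumes "finite (mrf_support n \<Omega>)" "0 < n" "mrf_support n \<Omega> \<noteq> {}"
    and "\<And>i u. i < n \<Longrightarrow> u \<in> mrf_support n \<Omega>
           \<Longrightarrow> \<bar>\<Sum>e\<in>{e\<in>E. i \<in> e}. \<psi>E e (restrict (\<lambda>j. u ! j) e)\<bar> \<le> B"
  shows "mrf_Delta n \<Omega> E \<psi>E \<le> B"
  unfolding mrf_Delta_def using assms by (intro Max.boundedI finite_image_set2) auto

lemma measure_pmf_expectation_ge_const:
  fixes G :: "'a \<Rightarrow> real"
  assumes lower: "\<And>p. p \<in> set_pmf R \<Longrightarrow> c \<le> G p"
    and upper: "\<And>p. p \<in> set_pmf R \<Longrightarrow> G p \<le> B"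
  shows "c \<le> measure_pmf.expectation R G"
proof (rule measure_pmf.integral_ge_const)
  have "\<bar>G p\<bar> \<le> max \<bar>c\<bar> \<bar>B\<bar>" if "p \<in> set_pmf R" for p
    using lower[OF that] upper[OF that] by linarith
  then show "integrable (measure_pmf R) G"
    by (intro measure_pmf.integrable_const_bound[where B = "max \<bar>c\<bar> \<bar>B\<bar>"])
      (auto simp: AE_measure_pmf_iff)
  show "AE p in measure_pmf R. c \<le> G p"
    using lower by (simp add: AE_measure_pmf_iff)
qed

section \<open>The chain MRF\<close>

definition penalty :: "nat \<Rightarrow> real" where
  "penalty h = 4 * ln (real (h ^ h))"

definition chain_edges :: "nat \<Rightarrow> nat set set" where
  "chain_edges h = (\<lambda>t. {t, Suc t}) ` {..<horizon h - 1}"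

definition chain_potential :: "nat \<Rightarrow> nat set \<Rightarrow> (nat \<Rightarrow> nat) \<Rightarrow> real" where
  "chain_potential h e u =
     (if u (Min e) = cell_rep h (phase h (Min e)) (u (Suc (Min e))) then 0 else - penalty h)"

definition transition_weight :: "nat \<Rightarrow> nat \<Rightarrow> nat \<Rightarrow> nat \<Rightarrow> real" where
  "transition_weight h t x y = exp (if x = cell_rep h (phase h t) y then 0 else - penalty h)"

definition chain_weight :: "nat \<Rightarrow> nat list \<Rightarrow> real" where
  "chain_weight h u = (\<Prod>t<horizon h - 1. transition_weight h t (u ! t) (u ! Suc t))"

definition column_mass :: "nat \<Rightarrow> real" where
  "column_mass h = 1 + (real (h ^ h) - 1) * exp (- penalty h)"

definition partition_fn :: "nat \<Rightarrow> real" where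
  "partition_fn h = real (h ^ h) * column_mass h ^ (horizon h - 1)"

abbreviation chain_expect :: "nat \<Rightarrow> (nat list \<Rightarrow> real) \<Rightarrow> real" where
  "chain_expect h g \<equiv>
     mrf_expect (horizon h) (\<lambda>_. {..<h ^ h}) (\<lambda>_ _. 0) (chain_edges h) (chain_potential h) g"

lemma penalty_nonneg: "1 \<le> h \<Longrightarrow> 0 \<le> penalty h"
  by (simp add: penalty_def)

lemma penalty_eq: "penalty h = 4 * real h * ln (real h)"
  by (simp add: penalty_def ln_realpow)

lemma mrf_weight_chain:
  "mrf_weight (horizon h) (\<lambda>_ _. 0) (chain_edges h) (chain_potential h) u = chain_weight h u"
proof -
  have inj: "inj_on (\<lambda>t::nat. {t, Suc t}) A" for A
  proof (rule inj_onI)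
    fix s t :: nat assume "{s, Suc s} = {t, Suc t}"
    then have "Min {s, Suc s} = Min {t, Suc t}" by simp
    then show "s = t" by simp
  qed
  have "(\<Sum>e\<in>chain_edges h. chain_potential h e (restrict (\<lambda>j. u ! j) e))
      = (\<Sum>t<horizon h - 1. if u ! t = cell_rep h (phase h t) (u ! Suc t) then 0 else - penalty h)"
    unfolding chain_edges_def by (simp add: sum.reindex[OF inj] chain_potential_def)
  then show ?thesis
    unfolding mrf_weight_def chain_weight_def transition_weight_def by (simp add: exp_sum)
qed

lemma exp_neg_penalty:
  assumes "1 \<le> h"
  shows "exp (- penalty h) = 1 / real (h ^ h) ^ 4"
proof -
  have "exp (penalty h) = real (h ^ h) ^ 4"
    unfolding penalty_def using exp_of_nat_mult[of 4 "ln (real (h ^ h))"] assms by simp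
  then show ?thesis by (simp add: exp_minus inverse_eq_divide)
qed

lemma one_le_column_mass: "1 \<le> h \<Longrightarrow> 1 \<le> column_mass h"
  unfolding column_mass_def by simp

lemma sum_transition_weight:
  assumes "1 \<le> h" "y < h ^ h"
  shows "(\<Sum>x<h ^ h. transition_weight h t x y) = column_mass h"
proof -
  let ?r = "cell_rep h (phase h t) y"
  have r: "?r \<in> {..<h ^ h}" using cell_rep_le[of h "phase h t" y] assms(2) by simp
  have "(\<Sum>x<h ^ h. transition_weight h t x y)
      = transition_weight h t ?r y + (\<Sum>x\<in>{..<h ^ h} - {?r}. exp (- penalty h))"
    by (simp add: sum.remove[OF _ r] transition_weight_def)
  also have "\<dots> = column_mass h"
    using r by (simp add: transition_weight_def column_mass_def card_Diff_singleton of_nat_diff)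
  finally show ?thesis .
qed

lemma sum_chain_weight:
  assumes "2 \<le> h"
  shows "(\<Sum>u\<in>{xs. set xs \<subseteq> {..<h ^ h} \<and> length xs = horizon h}. chain_weight h u) = partition_fn h"
proof -
  obtain k where k: "horizon h = Suc k" using two_le_horizon[OF assms] by (cases "horizon h") auto
  have "(\<Sum>u\<in>{xs. set xs \<subseteq> {..<h ^ h} \<and> length xs = Suc k}.
      \<Prod>t<k. transition_weight h t (u ! t) (u ! Suc t)) = real (card {..<h ^ h}) * column_mass h ^ k"
    using assms by (intro sum_lists_chain_prod sum_transition_weight) auto
  then show ?thesis
    by (simp add: chain_weight_def partition_fn_def k)
qed

lemma chain_weight_pos: "0 < chain_weight h u"
  unfolding chain_weight_def transition_weight_def by (intro prod_pos) simp

lemma chain_weight_arrivals: "chain_weight h (arrivals h x) = 1"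
  unfolding chain_weight_def
proof (intro prod.neutral ballI)
  fix t assume "t \<in> {..<horizon h - 1}"
  then have t: "t < horizon h" "Suc t < horizon h" by auto
  have "phase h t \<le> phase h (Suc t)" "phase h (Suc t) < h"
    using phase_mono phase_less t by simp_all
  then show "transition_weight h t (arrivals h x ! t) (arrivals h x ! Suc t) = 1"
    using cell_rep_cell_rep by (simp add: nth_arrivals t transition_weight_def)
qed

lemma partition_fn_ge: "1 \<le> h \<Longrightarrow> real (h ^ h) \<le> partition_fn h"
  unfolding partition_fn_def using one_le_column_mass[of h] by (simp add: one_le_power)

lemma partition_fn_pos: "1 \<le> h \<Longrightarrow> 0 < partition_fn h"
  using partition_fn_ge[of h] by (simp add: order_less_le_trans[of 0 "real (h ^ h)"])

text \<open>Each of the at most h^h transitions of a sequence may be violated with relative weight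
  h^(-4h), so the sequences arrivals h x carry all but a 1/h^(2h) fraction of the mass.\<close>
lemma arrival_mass_ge:
  assumes h: "2 \<le> h"
  shows "1 - 1 / real (h ^ h) ^ 2 \<le> real (h ^ h) / partition_fn h"
proof -
  let ?N = "real (h ^ h)" and ?K = "horizon h - 1"
  have h1: "1 \<le> h" and N: "1 \<le> ?N" using h by simp_all
  define \<epsilon> where "\<epsilon> = real ?K * (column_mass h - 1)"
  have "real ?K \<le> ?N"
    using phase_start_le_power[OF h, of h] by (simp add: horizon_def)
  moreover have "column_mass h - 1 \<le> ?N / ?N ^ 4"
    using N by (simp add: column_mass_def exp_neg_penalty[OF h1] divide_right_mono)
  ultimately have "\<epsilon> \<le> ?N * (?N / ?N ^ 4)"
    unfolding \<epsilon>_def using one_le_column_mass[OF h1] by (intro mult_mono) auto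
  also have "\<dots> = 1 / ?N ^ 2"
    using N by (simp add: power_def field_simps)
  finally have \<epsilon>_le: "\<epsilon> \<le> 1 / ?N ^ 2" .
  have "column_mass h ^ ?K \<le> exp (column_mass h - 1) ^ ?K"
    using one_le_column_mass[OF h1] exp_ge_add_one_self[of "column_mass h - 1"]
    by (intro power_mono) auto
  also have "\<dots> = exp \<epsilon>"
    by (simp add: \<epsilon>_def exp_of_nat_mult)
  finally have "exp (- \<epsilon>) \<le> 1 / column_mass h ^ ?K"
    using one_le_column_mass[OF h1] by (simp add: exp_minus inverse_eq_divide divide_left_mono)
  also have "\<dots> = ?N / partition_fn h"
    using N h1 by (auto simp: partition_fn_def)
  finally show ?thesis
    using exp_ge_add_one_self[of "- \<epsilon>"] \<epsilon>_le by linarith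
qed

lemma partition_fn_le:
  assumes h: "2 \<le> h"
  shows "partition_fn h \<le> 2 * real (h ^ h)"
proof -
  have N: "2 \<le> real (h ^ h)"
    using two_le_power_self[OF h] by (metis of_nat_le_iff of_nat_numeral)
  then have "2 * 1 \<le> real (h ^ h) * real (h ^ h)" by (intro mult_mono) auto
  then have "1 / real (h ^ h) ^ 2 \<le> 1 / 2" by (simp add: power2_eq_square divide_simps)
  with arrival_mass_ge[OF h] have "1 / 2 \<le> real (h ^ h) / partition_fn h" by linarith
  with partition_fn_pos[of h] h show ?thesis by (simp add: divide_simps)
qed

lemma chain_expect_eq:
  assumes "2 \<le> h"
  shows "chain_expect h g
    = (\<Sum>u\<in>{xs. set xs \<subseteq> {..<h ^ h} \<and> length xs = horizon h}. chain_weight h u * g u) / partition_fn h"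
  unfolding mrf_expect_def mrf_prob_def mrf_support_const mrf_weight_chain sum_chain_weight[OF assms]
  by (simp add: sum_divide_distrib)

lemma sum_chain_weight_arrivals:
  assumes "2 \<le> h"
  shows "(\<Sum>u\<in>arrivals h ` {..<h ^ h}. chain_weight h u * g u) = (\<Sum>x<h ^ h. g (arrivals h x))"
  using assms by (simp add: sum.reindex[OF inj_on_arrivals[OF assms]] chain_weight_arrivals)

lemma arrivals_image_subset:
  "arrivals h ` {..<h ^ h} \<subseteq> {xs. set xs \<subseteq> {..<h ^ h} \<and> length xs = horizon h}"
  using set_arrivals by auto

lemma chain_expect_ge_arrivals:
  assumes h: "2 \<le> h" and g: "\<And>u. 0 \<le> g u"
  shows "(\<Sum>x<h ^ h. g (arrivals h x)) / partition_fn h \<le> chain_expect h g"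
proof -
  have "(\<Sum>x<h ^ h. g (arrivals h x))
      \<le> (\<Sum>u\<in>{xs. set xs \<subseteq> {..<h ^ h} \<and> length xs = horizon h}. chain_weight h u * g u)"
    unfolding sum_chain_weight_arrivals[OF h, symmetric]
    using g by (intro sum_mono2 arrivals_image_subset finite_lists_length_eq finite_lessThan)
      (metis chain_weight_pos less_imp_le mult_nonneg_nonneg)
  then show ?thesis
    unfolding chain_expect_eq[OF h] using partition_fn_pos[of h] h by (simp add: divide_right_mono)
qed

lemma chain_expect_le_arrivals:
  assumes h: "2 \<le> h" and g: "\<And>u. set u \<subseteq> {..<h ^ h} \<Longrightarrow> length u = horizon h \<Longrightarrow> g u \<le> B"
  shows "chain_expect h g
    \<le> (\<Sum>x<h ^ h. g (arrivals h x)) / partition_fn h + B * (1 - real (h ^ h) / partition_fn h)"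
proof -
  let ?S = "{xs. set xs \<subseteq> {..<h ^ h} \<and> length xs = horizon h}"
  have Z: "0 < partition_fn h" using partition_fn_pos[of h] h by simp
  have mass: "sum (chain_weight h) (arrivals h ` {..<h ^ h}) = real (h ^ h)"
    using sum_chain_weight_arrivals[OF h, of "\<lambda>_. 1"] by simp
  have "(\<Sum>u\<in>?S. chain_weight h u * g u)
      \<le> (\<Sum>x<h ^ h. g (arrivals h x)) + B * (partition_fn h - real (h ^ h))"
    using sum_weighted_le_split[OF finite_lists_length_eq[of "{..<h ^ h}"] arrivals_image_subset,
        of "chain_weight h" g B] chain_weight_pos[of h] g
    by (simp add: sum_chain_weight_arrivals[OF h] sum_chain_weight[OF h] mass less_imp_le)
  then show ?thesis
    unfolding chain_expect_eq[OF h] using Z by (simp add: field_simps)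
qed

lemma chain_expect_le_bound:
  assumes h: "2 \<le> h" and g: "\<And>u. set u \<subseteq> {..<h ^ h} \<Longrightarrow> length u = horizon h \<Longrightarrow> g u \<le> B"
  shows "chain_expect h g \<le> B"
proof -
  let ?S = "{xs. set xs \<subseteq> {..<h ^ h} \<and> length xs = horizon h}"
  have "(\<Sum>u\<in>?S. chain_weight h u * g u) \<le> (\<Sum>u\<in>?S. chain_weight h u * B)"
    using g chain_weight_pos[of h] by (intro sum_mono mult_left_mono) (auto intro: less_imp_le)
  also have "\<dots> = partition_fn h * B"
    by (simp add: sum_distrib_right[symmetric] sum_chain_weight[OF h])
  finally show ?thesis
    unfolding chain_expect_eq[OF h] using partition_fn_pos[of h] h by (simp add: divide_simps mult.commute)
qed

lemma chain_Delta_le: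
  assumes h: "2 \<le> h"
  shows "mrf_Delta (horizon h) (\<lambda>_. {..<h ^ h}) (chain_edges h) (chain_potential h) \<le> 2 * penalty h"
proof (rule mrf_Delta_le)
  show "finite (mrf_support (horizon h) (\<lambda>_. {..<h ^ h}))"
    by (simp add: mrf_support_const finite_lists_length_eq)
  show "0 < horizon h" using two_le_horizon[OF h] by simp
  show "mrf_support (horizon h) (\<lambda>_. {..<h ^ h}) \<noteq> {}"
  proof -
    have "arrivals h 0 \<in> mrf_support (horizon h) (\<lambda>_. {..<h ^ h})"
      using set_arrivals[of 0 h] h by (simp add: mrf_support_const)
    then show ?thesis by blast
  qed
next
  fix i u
  let ?A = "{e \<in> chain_edges h. i \<in> e}"
  have "card ?A \<le> card {{i, Suc i}, {i - 1, i}}"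
    by (rule card_mono) (auto simp: chain_edges_def)
  also have "\<dots> \<le> 2"
    by (simp add: card_insert_if)
  finally have A: "card ?A \<le> 2" .
  have "\<bar>\<Sum>e\<in>?A. chain_potential h e (restrict (\<lambda>j. u ! j) e)\<bar>
      \<le> (\<Sum>e\<in>?A. \<bar>chain_potential h e (restrict (\<lambda>j. u ! j) e)\<bar>)"
    by (rule sum_abs)
  also have "\<dots> \<le> (\<Sum>e\<in>?A. penalty h)"
    using penalty_nonneg[of h] h by (intro sum_mono) (simp add: chain_potential_def)
  also have "\<dots> \<le> 2 * penalty h"
    using A penalty_nonneg[of h] h by (simp add: mult_right_mono)
  finally show "\<bar>\<Sum>e\<in>?A. chain_potential h e (restrict (\<lambda>j. u ! j) e)\<bar> \<le> 2 * penalty h" .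
qed

lemma chain_Delta_ge:
  assumes h: "2 \<le> h"
  shows "penalty h \<le> mrf_Delta (horizon h) (\<lambda>_. {..<h ^ h}) (chain_edges h) (chain_potential h)"
proof -
  let ?u = "1 # replicate (horizon h - 1) 0"
  have n: "2 \<le> horizon h" by (rule two_le_horizon[OF h])
  have "?u \<in> mrf_support (horizon h) (\<lambda>_. {..<h ^ h})"
    using two_le_power_self[OF h] n by (auto simp: mrf_support_def nth_Cons split: nat.splits)
  moreover have "{e \<in> chain_edges h. 0 \<in> e} = {{0, Suc 0}}"
    using n by (auto simp: chain_edges_def)
  ultimately have "\<bar>\<Sum>e\<in>{{0, Suc 0}}. chain_potential h e (restrict (\<lambda>j. ?u ! j) e)\<bar>
      \<le> mrf_Delta (horizon h) (\<lambda>_. {..<h ^ h}) (chain_edges h) (chain_potential h)"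
    using mrf_Delta_ge[where n = "horizon h" and \<Omega> = "\<lambda>_. {..<h ^ h}" and i = 0 and u = ?u
        and E = "chain_edges h" and \<psi>E = "chain_potential h"] n
    by (simp add: mrf_support_const finite_lists_length_eq)
  then show ?thesis
    using penalty_nonneg[of h] h n by (simp add: chain_potential_def)
qed

lemma ln_ge_one: "3 \<le> x \<Longrightarrow> 1 \<le> ln (x :: real)"
  using exp_le ln_ge_iff[of x 1] by simp

lemma chain_Delta_bounds:
  assumes h: "3 \<le> h"
  defines "\<Delta> \<equiv> mrf_Delta (horizon h) (\<lambda>_. {..<h ^ h}) (chain_edges h) (chain_potential h)"
  shows "real h \<le> \<Delta>" and "\<Delta> / ln \<Delta> \<le> 8 * real h"
proof -
  have h2: "2 \<le> h" using h by simp
  have ln_h: "1 \<le> ln (real h)" using h by (intro ln_ge_one) simp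
  have "real h \<le> penalty h"
    using ln_h mult_left_mono[OF ln_h, of "4 * real h"] by (simp add: penalty_eq)
  also have "\<dots> \<le> \<Delta>"
    unfolding \<Delta>_def by (rule chain_Delta_ge[OF h2])
  finally show h_le: "real h \<le> \<Delta>" .
  have ln_\<Delta>: "ln (real h) \<le> ln \<Delta>"
    using h_le h by simp
  have "\<Delta> / ln \<Delta> \<le> 2 * penalty h / ln (real h)"
    using chain_Delta_le[OF h2] h_le h ln_h ln_\<Delta> unfolding \<Delta>_def[symmetric]
    by (intro frac_le) auto
  also have "\<dots> = 8 * real h"
    using ln_h by (simp add: penalty_eq)
  finally show "\<Delta> / ln \<Delta> \<le> 8 * real h" .
qed

lemma fl_mrf_instance_chain:
  assumes "2 \<le> h"
  shows "fl_mrf_instance {..<h ^ h} (hst_dist h) (\<lambda>_. 1) (horizon h) (\<lambda>_. {..<h ^ h}) (chain_edges h)"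
  unfolding fl_mrf_instance_def
  using metric_on_hst_dist[OF assms] two_le_horizon[OF assms] assms
  by (auto simp: lessThan_empty_iff chain_edges_def)

section \<open>Expected costs and the lower bound\<close>

lemma chain_expect_alg_cost_ge:
  assumes h: "2 \<le> h" and alg: "online_alg {..<h ^ h} F \<sigma>"
  shows "real h / 4 \<le> chain_expect h (alg_cost (hst_dist h) (\<lambda>_. 1) F \<sigma>)"
proof -
  let ?cost = "alg_cost (hst_dist h) (\<lambda>_. 1) F \<sigma>"
  have "real h / 4 = (real h * real (h ^ h) / 2) / (2 * real (h ^ h))"
    using h by simp
  also have "\<dots> \<le> (\<Sum>x<h ^ h. ?cost (arrivals h x)) / partition_fn h"
    using sum_alg_cost_arrivals_ge[OF h alg] partition_fn_le[OF h] partition_fn_pos[of h] h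
      alg_cost_nonneg[OF _ hst_dist_nonneg]
    by (intro frac_le sum_nonneg) auto
  also have "\<dots> \<le> chain_expect h ?cost"
    using h by (intro chain_expect_ge_arrivals alg_cost_nonneg hst_dist_nonneg) auto
  finally show ?thesis .
qed

lemma chain_expect_opt_cost_le:
  assumes h: "2 \<le> h"
  shows "chain_expect h (opt_cost {..<h ^ h} (hst_dist h) (\<lambda>_. 1)) \<le> 3"
proof -
  let ?N = "real (h ^ h)" and ?B = "1 + real (horizon h)"
  have h1: "1 \<le> h" using h by simp
  have Z: "0 < partition_fn h" using partition_fn_pos[OF h1] .
  have "(\<Sum>x<h ^ h. opt_cost {..<h ^ h} (hst_dist h) (\<lambda>_. 1) (arrivals h x)) \<le> (\<Sum>x<h ^ h. 2)"
    using opt_cost_arrivals_le[OF h1] by (intro sum_mono) simp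
  then have "(\<Sum>x<h ^ h. opt_cost {..<h ^ h} (hst_dist h) (\<lambda>_. 1) (arrivals h x)) \<le> 2 * ?N"
    by simp
  then have "(\<Sum>x<h ^ h. opt_cost {..<h ^ h} (hst_dist h) (\<lambda>_. 1) (arrivals h x)) / partition_fn h \<le> 2"
    using partition_fn_ge[OF h1] Z by (simp add: divide_simps)
  moreover have "?B * (1 - ?N / partition_fn h) \<le> 1"
  proof -
    have N2: "2 \<le> ?N"
      using two_le_power_self[OF h] by (metis of_nat_le_iff of_nat_numeral)
    have "real (horizon h) \<le> ?N"
      using phase_start_le_power[OF h, of h] by (simp only: horizon_def of_nat_le_iff)
    moreover have "2 * ?N \<le> ?N * ?N"
      using N2 by (intro mult_right_mono) auto
    ultimately have "?B \<le> ?N * ?N"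
      using N2 by linarith
    then have "?B \<le> ?N ^ 2"
      by (simp only: power2_eq_square)
    then have "?B * (1 / ?N ^ 2) \<le> 1"
      using N2 by (simp add: divide_simps)
    moreover have "?B * (1 - ?N / partition_fn h) \<le> ?B * (1 / ?N ^ 2)"
      using arrival_mass_ge[OF h] by (intro mult_left_mono) auto
    ultimately show ?thesis by linarith
  qed
  moreover have "chain_expect h (opt_cost {..<h ^ h} (hst_dist h) (\<lambda>_. 1))
      \<le> (\<Sum>x<h ^ h. opt_cost {..<h ^ h} (hst_dist h) (\<lambda>_. 1) (arrivals h x)) / partition_fn h
        + ?B * (1 - ?N / partition_fn h)"
    using opt_cost_le_length[OF h1] by (intro chain_expect_le_arrivals[OF h]) metis
  ultimately show ?thesis by linarith
qed

lemma chain_expect_opt_cost_pos: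
  assumes h: "2 \<le> h"
  shows "0 < chain_expect h (opt_cost {..<h ^ h} (hst_dist h) (\<lambda>_. 1))"
proof -
  have h1: "1 \<le> h" using h by simp
  have ne: "{..<h ^ h} \<noteq> {}" using h1 by (simp add: lessThan_empty_iff)
  have opt: "1 \<le> opt_cost {..<h ^ h} (hst_dist h) (\<lambda>_. 1) u" for u
    using ne by (intro one_le_opt_cost hst_dist_nonneg) simp_all
  have "0 < (\<Sum>x<h ^ h. opt_cost {..<h ^ h} (hst_dist h) (\<lambda>_. 1) (arrivals h x)) / partition_fn h"
    using ne partition_fn_pos[OF h1] opt
    by (intro divide_pos_pos sum_pos finite_lessThan) (auto intro: less_le_trans[OF zero_less_one])
  also have "\<dots> \<le> chain_expect h (opt_cost {..<h ^ h} (hst_dist h) (\<lambda>_. 1))"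
    using opt by (intro chain_expect_ge_arrivals[OF h]) (auto intro: order_trans[OF zero_le_one])
  finally show ?thesis .
qed

lemma rand_alg_expected_cost_ge:
  assumes h: "2 \<le> h" and R: "\<forall>(F, \<sigma>) \<in> set_pmf R. online_alg {..<h ^ h} F \<sigma>"
  shows "real h / 4 \<le> rand_alg_expected_cost {..<h ^ h} (hst_dist h) (\<lambda>_. 1) (horizon h)
    (\<lambda>_. {..<h ^ h}) (\<lambda>_ _. 0) (chain_edges h) (chain_potential h) R"
proof -
  let ?G = "\<lambda>(F, \<sigma>). chain_expect h (alg_cost (hst_dist h) (\<lambda>_. 1) F \<sigma>)"
  have "real h / 4 \<le> ?G p \<and> ?G p \<le> real (h ^ h) + real (horizon h)" if p: "p \<in> set_pmf R" for p
  proof -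
    obtain F \<sigma> where p_eq: "p = (F, \<sigma>)" by (cases p)
    with R p have alg: "online_alg {..<h ^ h} F \<sigma>" by auto
    have "1 \<le> h" using h by simp
    then have "chain_expect h (alg_cost (hst_dist h) (\<lambda>_. 1) F \<sigma>) \<le> real (h ^ h) + real (horizon h)"
      using alg_cost_le[OF _ alg] by (intro chain_expect_le_bound[OF h]) metis
    with chain_expect_alg_cost_ge[OF h alg] show ?thesis
      by (simp add: p_eq)
  qed
  then show ?thesis
    unfolding rand_alg_expected_cost_def by (intro measure_pmf_expectation_ge_const) blast+
qed

lemma hard_chain_instance:
  assumes h: "3 \<le> h"
  shows "\<exists>M d f n \<Omega> \<psi>1 E \<psi>E.
           fl_mrf_instance M d f n \<Omega> E \<and>
           real h \<le> mrf_Delta n \<Omega> E \<psi>E \<and>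
           0 < mrf_expect n \<Omega> \<psi>1 E \<psi>E (opt_cost M d f) \<and>
           (\<forall>R. (\<forall>(F, \<sigma>) \<in> set_pmf R. online_alg M F \<sigma>) \<longrightarrow>
              1 / 96 * (mrf_Delta n \<Omega> E \<psi>E / ln (mrf_Delta n \<Omega> E \<psi>E))
                * mrf_expect n \<Omega> \<psi>1 E \<psi>E (opt_cost M d f)
              \<le> rand_alg_expected_cost M d f n \<Omega> \<psi>1 E \<psi>E R)"
proof (intro exI conjI)
  have h2: "2 \<le> h" using h by simp
  let ?\<Delta> = "mrf_Delta (horizon h) (\<lambda>_. {..<h ^ h}) (chain_edges h) (chain_potential h)"
  let ?OPT = "chain_expect h (opt_cost {..<h ^ h} (hst_dist h) (\<lambda>_. 1))"
  show "fl_mrf_instance {..<h ^ h} (hst_dist h) (\<lambda>_. 1) (horizon h) (\<lambda>_. {..<h ^ h}) (chain_edges h)"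
    by (rule fl_mrf_instance_chain[OF h2])
  show "real h \<le> ?\<Delta>"
    by (rule chain_Delta_bounds(1)[OF h])
  show "0 < ?OPT"
    by (rule chain_expect_opt_cost_pos[OF h2])
  have "1 / 96 * (?\<Delta> / ln ?\<Delta>) * ?OPT \<le> 1 / 96 * (8 * real h) * 3"
    using chain_Delta_bounds[OF h] chain_expect_opt_cost_le[OF h2] chain_expect_opt_cost_pos[OF h2] h
    by (intro mult_mono mult_left_mono) auto
  then show "\<forall>R. (\<forall>(F, \<sigma>) \<in> set_pmf R. online_alg {..<h ^ h} F \<sigma>) \<longrightarrow>
      1 / 96 * (?\<Delta> / ln ?\<Delta>) * ?OPT \<le> rand_alg_expected_cost {..<h ^ h} (hst_dist h) (\<lambda>_. 1)
        (horizon h) (\<lambda>_. {..<h ^ h}) (\<lambda>_ _. 0) (chain_edges h) (chain_potential h) R"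
    using rand_alg_expected_cost_ge[OF h2] by force
qed

theorem corollary5p4:
  shows "\<exists>c>0. \<forall>D0::real. \<exists>M d f n \<Omega> \<psi>1 E \<psi>E.
           fl_mrf_instance M d f n \<Omega> E \<and>
           mrf_Delta n \<Omega> E \<psi>E \<ge> D0 \<and>
           mrf_expect n \<Omega> \<psi>1 E \<psi>E (opt_cost M d f) > 0 \<and>
           (\<forall>R. (\<forall>(F, \<sigma>) \<in> set_pmf R. online_alg M F \<sigma>) \<longrightarrow>
              rand_alg_expected_cost M d f n \<Omega> \<psi>1 E \<psi>E R
                \<ge> c * (mrf_Delta n \<Omega> E \<psi>E / ln (mrf_Delta n \<Omega> E \<psi>E))
                    * mrf_expect n \<Omega> \<psi>1 E \<psi>E (opt_cost M d f))"
proof (intro exI[of _ "1 / 96 :: real"] conjI allI)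
  fix D0 :: real
  define h where "h = max 3 (nat \<lceil>D0\<rceil>)"
  have "3 \<le> h" and "D0 \<le> real h"
    unfolding h_def by (auto intro: order_trans[OF real_nat_ceiling_ge])
  with hard_chain_instance show "\<exists>M d f n \<Omega> \<psi>1 E \<psi>E.
      fl_mrf_instance M d f n \<Omega> E \<and>
      mrf_Delta n \<Omega> E \<psi>E \<ge> D0 \<and>
      mrf_expect n \<Omega> \<psi>1 E \<psi>E (opt_cost M d f) > 0 \<and>
      (\<forall>R. (\<forall>(F, \<sigma>) \<in> set_pmf R. online_alg M F \<sigma>) \<longrightarrow>
         rand_alg_expected_cost M d f n \<Omega> \<psi>1 E \<psi>E R
           \<ge> 1 / 96 * (mrf_Delta n \<Omega> E \<psi>E / ln (mrf_Delta n \<Omega> E \<psi>E))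
               * mrf_expect n \<Omega> \<psi>1 E \<psi>E (opt_cost M d f))"
    by (meson order_trans)
qed simp

end
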